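(* For problem (P) with $\Phi_\lambda=\Phi_{0,\lambda}$: (i) every stationary point of (P) is a local minimizer of $F$; (ii) if $x^*$ is a local minimizer of $F$ with $F(x^* )<\infty$, and the Slater condition $$\{x:\ x\in\operatorname{ri}(\operatorname{dom}f),\ Ax\in\operatorname{ri}(\operatorname{dom}g),\ (Bx-b)_{\bar J_*}=0\}\neq\emptyset$$ holds, where $J_*=\{i:(Bx^*-b)_i\ne0\}$, $\bar J_*=[r]\setminus J_*$, and "$\operatorname{ri}$" may be omitted for $f$ (resp. $g$) when $f$ (resp. $g$) is polyhedral, then $x^*$ is a stationary point of (P).
   Context: Let $f:\mathbb R^n\to(-\infty,\infty]$, $g:\mathbb R^m\to(-\infty,\infty]$ be proper, lsc and convex; $A\in\mathbb R^{m\times n}$, $B\in\mathbb R^{r\times n}$, $b\in\mathbb R^r$, $\lambda\in\mathbb R^r$, $\lambda>0$. $\Phi_{0,\lambda}(u)=\sum_{i=1}^r\lambda_i\mathbf 1_{\{u_i\neq0\}}$; problem (P) is $\min_x F(x)=f(x)+g(Ax)+\Phi_{0,\lambda}(Bx-b)$. $\partial$ denotes the limiting subdifferential (the convex subdifferential for convex functions); $\partial\Phi_{0,\lambda}(u)=\{z: z_i\in\mathbb R\text{ if }u_i=0,\ z_i=0\text{ otherwise}\}$. A point $x^*$ is a stationary point of (P) if $0\in\partial f(x^* )+A^\top\partial g(Ax^* )+B^\top\partial\Phi_{0,\lambda}(Bx^*-b)$. $\operatorname{ri}$ denotes relative interior. *)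

theory Defs
  imports "HOL-Analysis.Analysis"
begin

text \<open>Extended-real-valued functions on Euclidean spaces; the value \<infinity> encodes
  +\<infinity> (functions with values in (-\<infinity>,\<infinity>]).\<close>

definition edom :: "('a \<Rightarrow> ereal) \<Rightarrow> 'a set" where
  "edom f = {x. f x < \<infinity>}"

definition proper_fun :: "('a \<Rightarrow> ereal) \<Rightarrow> bool" where
  "proper_fun f \<longleftrightarrow> (\<forall>x. f x \<noteq> -\<infinity>) \<and> (\<exists>x. f x < \<infinity>)"

definition lsc_fun :: "('a::topological_space \<Rightarrow> ereal) \<Rightarrow> bool" where
  "lsc_fun f \<longleftrightarrow> (\<forall>x. f x \<le> Liminf (at x) f)"

definition convex_fun :: "('a::real_vector \<Rightarrow> ereal) \<Rightarrow> bool" where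
  "convex_fun f \<longleftrightarrow> (\<forall>x y. \<forall>t::real. 0 < t \<and> t < 1 \<longrightarrow>
      f ((1 - t) *\<^sub>R x + t *\<^sub>R y) \<le> ereal (1 - t) * f x + ereal t * f y)"

definition csubdiff :: "('a::real_inner \<Rightarrow> ereal) \<Rightarrow> 'a \<Rightarrow> 'a set" where
  "csubdiff f x = {v. f x < \<infinity> \<and> (\<forall>y. f x + ereal (v \<bullet> (y - x)) \<le> f y)}"

definition polyhedral_fun :: "('a::euclidean_space \<Rightarrow> ereal) \<Rightarrow> bool" where
  "polyhedral_fun f \<longleftrightarrow> polyhedron {(x, t::real). f x \<le> ereal t}"

definition Phi0 :: "real^'r \<Rightarrow> real^'r \<Rightarrow> real" where
  "Phi0 lam u = (\<Sum>i\<in>UNIV. if u $ i \<noteq> 0 then lam $ i else 0)"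

text \<open>Limiting subdifferential of \<Phi>_{0,\<lambda>}, as given in the paper.\<close>
definition subdiff_Phi0 :: "real^'r \<Rightarrow> (real^'r) set" where
  "subdiff_Phi0 u = {z. \<forall>i. u $ i \<noteq> 0 \<longrightarrow> z $ i = 0}"

definition Fobj :: "(real^'n \<Rightarrow> ereal) \<Rightarrow> (real^'m \<Rightarrow> ereal) \<Rightarrow> real^'n^'m
    \<Rightarrow> real^'n^'r \<Rightarrow> real^'r \<Rightarrow> real^'r \<Rightarrow> real^'n \<Rightarrow> ereal" where
  "Fobj f g A B b lam x = f x + g (A *v x) + ereal (Phi0 lam (B *v x - b))"

definition stationary_P :: "(real^'n \<Rightarrow> ereal) \<Rightarrow> (real^'m \<Rightarrow> ereal) \<Rightarrow> real^'n^'m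
    \<Rightarrow> real^'n^'r \<Rightarrow> real^'r \<Rightarrow> real^'n \<Rightarrow> bool" where
  "stationary_P f g A B b x \<longleftrightarrow>
     (\<exists>v w z. v \<in> csubdiff f x \<and> w \<in> csubdiff g (A *v x) \<and> z \<in> subdiff_Phi0 (B *v x - b)
        \<and> v + transpose A *v w + transpose B *v z = 0)"

definition local_min :: "('a::metric_space \<Rightarrow> ereal) \<Rightarrow> 'a \<Rightarrow> bool" where
  "local_min F x \<longleftrightarrow> (\<exists>e>0. \<forall>y\<in>ball x e. F x \<le> F y)"

end

theory Submission
  imports Defs
begin

text \<open>
  (i) If \<open>v + A\<^sup>T w + B\<^sup>T z = 0\<close> with \<open>z\<close> vanishing off the zero set of \<open>B x - b\<close>, then near
  \<open>u = B x - b\<close> the penalty grows by at least \<open>z \<bullet> e\<close>: nonzero entries stay nonzero, and an entry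
  becoming nonzero costs \<open>\<lambda>\<^sub>i > z\<^sub>i e\<^sub>i\<close>. Adding the subgradient inequalities of \<open>f\<close> and \<open>g\<close>
  gives \<open>F x \<le> F y\<close> near \<open>x\<close>.

  (ii) Near a local minimiser \<open>x\<^sup>*\<close> the penalty is constant on the affine set \<open>L\<close> of points
  vanishing wherever \<open>B x\<^sup>* - b\<close> does, so by convexity \<open>x\<^sup>*\<close> minimises \<open>f + g \<circ> A\<close> on \<open>L\<close>.
  Lifting to \<open>((x, s), (y, t))\<close>, a polyhedral \<open>f\<close> or \<open>g\<close> becomes a polyhedral epigraph constraint and
  the others stay in the objective, while \<open>y = A x\<close>, \<open>x \<in> L\<close> is an affine constraint. Minimising a
  convex function over its domain intersected with a polyhedron that meets the relative interior of
  the domain yields a subgradient whose negative is normal to the polyhedron (separation by a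
  functional in the span of the differences, then Farkas' lemma). Splitting this normal vector again
  by Farkas' lemma produces \<open>v \<in> \<partial>f(x\<^sup>*)\<close>, \<open>w \<in> \<partial>g(A x\<^sup>*)\<close>, and a vector \<open>-(v + A\<^sup>T w)\<close>
  orthogonal to the kernel of the rows of \<open>B\<close> indexed by the zero set, hence of the form \<open>B\<^sup>T z\<close>.
\<close>

section \<open>Normal cones and subgradients\<close>

definition normal_cone :: "'a::real_inner set \<Rightarrow> 'a \<Rightarrow> 'a set" where
  "normal_cone S x = {n. \<forall>y\<in>S. n \<bullet> (y - x) \<le> 0}"

definition subgradients :: "'a set \<Rightarrow> ('a::real_inner \<Rightarrow> real) \<Rightarrow> 'a \<Rightarrow> 'a set" where
  "subgradients D G x = {u. \<forall>y\<in>D. G x + u \<bullet> (y - x) \<le> G y}"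

lemma inner_self_nonpos_iff: "x \<bullet> x \<le> 0 \<longleftrightarrow> x = (0::'a::real_inner)"
  using inner_gt_zero_iff[of x] by (auto simp del: inner_gt_zero_iff)

lemma convex_cone_normal_cone: "convex_cone (normal_cone S x)"
  unfolding convex_cone_iff normal_cone_def
  by (auto simp: inner_add_left mult_nonneg_nonpos add_nonpos_nonpos)

lemma normal_cone_UNIV: "normal_cone UNIV x = {0}"
proof -
  have "n = 0" if "n \<in> normal_cone UNIV x" for n
  proof -
    have "n \<bullet> ((x + n) - x) \<le> 0"
      using that by (simp only: normal_cone_def mem_Collect_eq) blast
    then show ?thesis
      by (simp add: inner_self_nonpos_iff)
  qed
  then show ?thesis
    by (auto simp: normal_cone_def)
qed

lemma normal_cone_affine:
  assumes "affine S" "x \<in> S" "y \<in> S" "n \<in> normal_cone S x"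
  shows "n \<bullet> (y - x) = 0"
proof -
  have "x + 1 *\<^sub>R (x - y) \<in> S"
    using assms by (intro mem_affine_3_minus) auto
  then have "n \<bullet> (x - y) \<le> 0"
    using assms(4) by (auto simp: normal_cone_def)
  moreover have "n \<bullet> (y - x) \<le> 0"
    using assms by (auto simp: normal_cone_def)
  ultimately show ?thesis
    by (simp add: inner_diff_right)
qed

lemma normal_cone_Times:
  assumes n: "n \<in> normal_cone (S \<times> T) (a, b)" and "a \<in> S" "b \<in> T"
  shows "fst n \<in> normal_cone S a" "snd n \<in> normal_cone T b"
proof -
  have "n \<bullet> ((y, b) - (a, b)) \<le> 0" if "y \<in> S" for y
    using n that \<open>b \<in> T\<close> unfolding normal_cone_def by blast
  then show "fst n \<in> normal_cone S a"
    by (simp add: normal_cone_def inner_prod_def)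
  have "n \<bullet> ((a, y) - (a, b)) \<le> 0" if "y \<in> T" for y
    using n that \<open>a \<in> S\<close> unfolding normal_cone_def by blast
  then show "snd n \<in> normal_cone T b"
    by (simp add: normal_cone_def inner_prod_def)
qed

lemma subgradients_Times:
  assumes u: "u \<in> subgradients (S \<times> T) (\<lambda>p. G1 (fst p) + G2 (snd p)) (a, b)" and "a \<in> S" "b \<in> T"
  shows "fst u \<in> subgradients S G1 a" "snd u \<in> subgradients T G2 b"
proof -
  have u': "G1 a + G2 b + u \<bullet> ((y, z) - (a, b)) \<le> G1 y + G2 z" if "y \<in> S" "z \<in> T" for y z
  proof -
    have "(y, z) \<in> S \<times> T"
      using that by simp
    with u show ?thesis
      unfolding subgradients_def by fastforce
  qed
  show "fst u \<in> subgradients S G1 a"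
    using u'[OF _ \<open>b \<in> T\<close>] by (simp add: subgradients_def inner_prod_def)
  show "snd u \<in> subgradients T G2 b"
    using u'[OF \<open>a \<in> S\<close>] by (simp add: subgradients_def inner_prod_def)
qed

lemma convex_on_linear_vimage:
  assumes h: "convex_on S h" and l: "linear l"
  shows "convex_on (l -` S) (\<lambda>x. h (l x))"
proof (rule convex_onI)
  show "convex (l -` S)"
    using l convex_on_imp_convex[OF h] by (rule convex_linear_vimage)
  fix t :: real and x y
  assume "0 < t" "t < 1" "x \<in> l -` S" "y \<in> l -` S"
  then show "h (l ((1 - t) *\<^sub>R x + t *\<^sub>R y)) \<le> (1 - t) * h (l x) + t * h (l y)"
    using convex_onD[OF h, of t "l x" "l y"] by (simp add: linear_add[OF l] linear_scale[OF l])
qed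

lemma convex_on_Times_add:
  assumes "convex_on S G1" "convex_on T G2"
  shows "convex_on (S \<times> T) (\<lambda>p. G1 (fst p) + G2 (snd p))"
proof -
  have ST: "convex (S \<times> T)"
    using assms by (simp add: convex_Times convex_on_imp_convex)
  have "convex_on (S \<times> T) (\<lambda>p. G1 (fst p))"
    by (rule convex_on_subset[OF convex_on_linear_vimage[OF assms(1) linear_fst] _ ST]) auto
  moreover have "convex_on (S \<times> T) (\<lambda>p. G2 (snd p))"
    by (rule convex_on_subset[OF convex_on_linear_vimage[OF assms(2) linear_snd] _ ST]) auto
  ultimately show ?thesis
    by (rule convex_on_add)
qed

lemma convex_on_local_min_imp_min:
  fixes h :: "'a::real_normed_vector \<Rightarrow> real"
  assumes h: "convex_on C h" and x: "x \<in> C" and "0 < e"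
    and min: "\<forall>z\<in>C \<inter> ball x e. h x \<le> h z" and y: "y \<in> C"
  shows "h x \<le> h y"
proof -
  define t where "t = e / (norm (y - x) + e)"
  have "0 < norm (y - x) + e"
    using \<open>0 < e\<close> by (simp add: add_nonneg_pos)
  then have t: "0 < t" "t \<le> 1"
    using \<open>0 < e\<close> by (auto simp: t_def)
  define z where "z = (1 - t) *\<^sub>R x + t *\<^sub>R y"
  have "z \<in> C"
    using h x y t unfolding z_def convex_on_def convex_def by simp
  moreover have "dist x z < e"
  proof -
    have "dist x z = t * norm (y - x)"
      using t by (simp add: z_def dist_norm algebra_simps norm_minus_commute flip: scaleR_diff_right)
    also have "\<dots> < e"
    proof -
      have "t * (norm (y - x) + e) = e"
        using \<open>0 < norm (y - x) + e\<close> by (simp add: t_def)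
      moreover have "0 < t * e"
        using t(1) \<open>0 < e\<close> by simp
      ultimately show ?thesis
        by (simp add: distrib_left)
    qed
    finally show ?thesis .
  qed
  ultimately have "h x \<le> h z"
    using min by simp
  also have "h z \<le> (1 - t) * h x + t * h y"
    unfolding z_def using convex_onD[OF h] t x y by simp
  finally show ?thesis
    using t by (simp add: algebra_simps)
qed

section \<open>Normal cones of polyhedra\<close>

lemma separation_closed_convex_cone:
  fixes n :: "'a::euclidean_space"
  assumes "closed K" "convex_cone K" "n \<notin> K"
  obtains d where "0 < n \<bullet> d" "\<forall>k\<in>K. k \<bullet> d \<le> 0"
proof -
  obtain c \<beta> where c: "c \<bullet> n < \<beta>" "\<forall>k\<in>K. \<beta> < c \<bullet> k"
    using separating_hyperplane_closed_point[of K n] assms by (auto simp: convex_cone_def)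
  have "\<beta> < 0"
    using c(2) convex_cone_contains_0[OF assms(2)] by fastforce
  have "0 \<le> c \<bullet> k" if "k \<in> K" for k
  proof (rule ccontr)
    assume neg: "\<not> 0 \<le> c \<bullet> k"
    \<comment> \<open>scaling \<open>k\<close> pushes \<open>c \<bullet> k\<close> below \<open>\<beta>\<close>\<close>
    define t where "t = (\<beta> - 1) / (c \<bullet> k)"
    have "t *\<^sub>R k \<in> K"
      using neg \<open>\<beta> < 0\<close> that assms(2)
      by (intro convex_cone_scaleR) (auto simp: t_def divide_nonpos_neg)
    then have "\<beta> < t * (c \<bullet> k)"
      using c(2) by fastforce
    with neg show False
      by (simp add: t_def)
  qed
  then show ?thesis
    using that[of "- c"] c(1) \<open>\<beta> < 0\<close> by (auto simp: inner_commute)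
qed

lemma normal_cone_inequalities:
  fixes a :: "'i \<Rightarrow> 'a::euclidean_space"
  assumes I: "finite I" and x: "\<forall>i\<in>I. a i \<bullet> x \<le> b i"
  shows "normal_cone {y. \<forall>i\<in>I. a i \<bullet> y \<le> b i} x = convex_cone hull (a ` {i\<in>I. a i \<bullet> x = b i})"
    (is "normal_cone ?P x = convex_cone hull ?act")
proof
  have "?act \<subseteq> normal_cone ?P x"
    by (auto simp: normal_cone_def inner_diff_right)
  then show "convex_cone hull ?act \<subseteq> normal_cone ?P x"
    by (simp add: hull_minimal convex_cone_normal_cone)
next
  show "normal_cone ?P x \<subseteq> convex_cone hull ?act"
  proof
    fix n assume n: "n \<in> normal_cone ?P x"
    show "n \<in> convex_cone hull ?act"
    proof (rule ccontr)
      assume "n \<notin> convex_cone hull ?act"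
      then obtain d where d: "0 < n \<bullet> d" "\<forall>k\<in>convex_cone hull ?act. k \<bullet> d \<le> 0"
        using separation_closed_convex_cone[OF closed_convex_cone_hull convex_cone_convex_cone_hull]
          I by (metis (no_types, lifting) finite_imageI finite_subset mem_Collect_eq subsetI)
      have "\<forall>\<^sub>F t in at_right 0. a i \<bullet> (x + t *\<^sub>R d) \<le> b i" if "i \<in> I" for i
      proof (cases "a i \<bullet> x = b i")
        case True
        have "a i \<bullet> d \<le> 0"
          using d(2) that True by (simp add: hull_inc)
        with True show ?thesis
          using eventually_at_right_less[of "0::real"]
          by (auto simp: inner_add_right mult_nonneg_nonpos elim: eventually_mono)
      next
        case False
        then have slack: "a i \<bullet> x < b i"
          using x that by force
        have "((\<lambda>t. a i \<bullet> (x + t *\<^sub>R d)) \<longlongrightarrow> a i \<bullet> x) (at_right 0)"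
          by (auto intro!: tendsto_eq_intros)
        from order_tendstoD(2)[OF this slack] show ?thesis
          by (rule eventually_mono) simp
      qed
      then have "\<forall>\<^sub>F t in at_right 0. 0 < t \<and> x + t *\<^sub>R d \<in> ?P"
        using I eventually_at_right_less[of 0] by (simp add: eventually_conj_iff eventually_ball_finite)
      then obtain t :: real where "0 < t" "x + t *\<^sub>R d \<in> ?P"
        using eventually_happens trivial_limit_at_right_real by blast
      with n have "n \<bullet> (t *\<^sub>R d) \<le> 0"
        by (auto simp: normal_cone_def)
      with \<open>0 < t\<close> d(1) show False
        by (simp add: mult_le_0_iff)
    qed
  qed
qed

lemma normal_cone_Int_polyhedra:
  fixes P Q :: "'a::euclidean_space set"
  assumes "polyhedron P" "polyhedron Q" "x \<in> P" "x \<in> Q" "n \<in> normal_cone (P \<inter> Q) x"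
  obtains n1 n2 where "n1 \<in> normal_cone P x" "n2 \<in> normal_cone Q x" "n = n1 + n2"
proof -
  obtain F1 where F1: "finite F1" "P = \<Inter>F1" "\<forall>h\<in>F1. \<exists>a b. a \<noteq> 0 \<and> h = {y. a \<bullet> y \<le> b}"
    using assms(1) unfolding polyhedron_def by blast
  obtain F2 where F2: "finite F2" "Q = \<Inter>F2" "\<forall>h\<in>F2. \<exists>a b. a \<noteq> 0 \<and> h = {y. a \<bullet> y \<le> b}"
    using assms(2) unfolding polyhedron_def by blast
  have "\<forall>h\<in>F1 \<union> F2. \<exists>ab. h = {y. fst ab \<bullet> y \<le> snd ab}"
    using F1(3) F2(3) by fastforce
  then obtain ab where ab: "\<forall>h\<in>F1 \<union> F2. h = {y. fst (ab h) \<bullet> y \<le> snd (ab h)}"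
    by (metis bchoice)
  define a where "a h = fst (ab h)" for h
  define b where "b h = snd (ab h)" for h
  have P: "P = {y. \<forall>h\<in>F1. a h \<bullet> y \<le> b h}" and Q: "Q = {y. \<forall>h\<in>F2. a h \<bullet> y \<le> b h}"
    using F1(2) F2(2) ab by (auto simp: a_def b_def)
  let ?act = "\<lambda>F. a ` {h\<in>F. a h \<bullet> x = b h}"
  have "P \<inter> Q = {y. \<forall>h\<in>F1 \<union> F2. a h \<bullet> y \<le> b h}"
    by (auto simp: P Q)
  moreover have "\<forall>h\<in>F1 \<union> F2. a h \<bullet> x \<le> b h"
    using assms(3,4) by (auto simp: P Q)
  ultimately have "normal_cone (P \<inter> Q) x = convex_cone hull (a ` {h\<in>F1 \<union> F2. a h \<bullet> x = b h})"
    using F1(1) F2(1) by (simp add: normal_cone_inequalities)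
  also have "a ` {h\<in>F1 \<union> F2. a h \<bullet> x = b h} = ?act F1 \<union> ?act F2"
    by blast
  finally have "n \<in> convex_cone hull (?act F1 \<union> ?act F2)"
    using assms(5) by simp
  then obtain n1 n2 where "n1 \<in> convex_cone hull ?act F1" "n2 \<in> convex_cone hull ?act F2" "n = n1 + n2"
    unfolding convex_cone_hull_Un by blast
  moreover have "normal_cone P x = convex_cone hull ?act F1" "normal_cone Q x = convex_cone hull ?act F2"
    using assms(3,4) F1(1) F2(1) unfolding P Q by (simp_all add: normal_cone_inequalities)
  ultimately show ?thesis
    using that by blast
qed

lemma polyhedron_linear_preimage:
  fixes h :: "'a::euclidean_space \<Rightarrow> 'b::euclidean_space"
  assumes "polyhedron S" "linear h"
  shows "polyhedron (h -` S)"
proof -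
  obtain F where F: "finite F" "S = \<Inter>F" "\<forall>H\<in>F. \<exists>a b. a \<noteq> 0 \<and> H = {y. a \<bullet> y \<le> b}"
    using assms(1) unfolding polyhedron_def by blast
  have "polyhedron (h -` H)" if "H \<in> F" for H
  proof -
    have "\<exists>a b. a \<noteq> 0 \<and> H = {y. a \<bullet> y \<le> b}"
      using F(3) that by simp
    then obtain a b where H: "H = {y. a \<bullet> y \<le> b}"
      by (elim exE conjE)
    have "adjoint h a \<bullet> x = a \<bullet> h x" for x
      by (metis adjoint_works[OF assms(2)] inner_commute)
    then have "h -` H = {x. adjoint h a \<bullet> x \<le> b}"
      by (simp add: H)
    then show ?thesis
      by (simp add: polyhedron_halfspace_le)
  qed
  moreover have "h -` S = \<Inter>((\<lambda>H. h -` H) ` F)"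
    using F(2) by auto
  ultimately show ?thesis
    using F(1) by (metis finite_imageI imageE polyhedron_Inter)
qed

lemma polyhedron_Times:
  fixes S :: "'a::euclidean_space set" and T :: "'b::euclidean_space set"
  assumes "polyhedron S" "polyhedron T"
  shows "polyhedron (S \<times> T)"
proof -
  have "S \<times> T = fst -` S \<inter> snd -` T"
    by auto
  then show ?thesis
    using assms polyhedron_linear_preimage[OF _ linear_fst] polyhedron_linear_preimage[OF _ linear_snd]
    by (metis polyhedron_Int)
qed

section \<open>Optimality conditions for a convex function on a polyhedron\<close>

lemma parallel_functional_min_at_rel_interior:
  fixes n :: "'a::euclidean_space"
  assumes p0: "p0 \<in> rel_interior D" and x: "x \<in> affine hull D" "x + n \<in> affine hull D"
    and min: "\<forall>p\<in>D. n \<bullet> p0 \<le> n \<bullet> p"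
  shows "n = 0"
proof (rule ccontr)
  assume "n \<noteq> 0"
  obtain e where "0 < e" and e: "ball p0 e \<inter> affine hull D \<subseteq> D"
    using p0 mem_rel_interior_ball by blast
  define t where "t = e / (2 * norm n)"
  have "0 < t"
    using \<open>0 < e\<close> \<open>n \<noteq> 0\<close> by (simp add: t_def)
  have "p0 \<in> affine hull D"
    using p0 rel_interior_subset by (blast intro: hull_inc)
  then have "p0 + t *\<^sub>R (x - (x + n)) \<in> affine hull D"
    using x by (intro mem_affine_3_minus) auto
  moreover have "dist p0 (p0 + t *\<^sub>R (x - (x + n))) < e"
    using \<open>0 < e\<close> \<open>n \<noteq> 0\<close> by (simp add: dist_norm t_def)
  ultimately have "p0 - t *\<^sub>R n \<in> D"
    using e by auto
  with min have "t * (n \<bullet> n) \<le> 0"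
    by (force simp: inner_diff_right)
  moreover have "0 < t * (n \<bullet> n)"
    using \<open>0 < t\<close> \<open>n \<noteq> 0\<close> by simp
  ultimately show False
    by simp
qed

text \<open>Separating the epigraph from \<open>(S \<inter> affine hull D) \<times> {..<G x}\<close> by a functional in the span
  of their differences makes its first component parallel to \<open>affine hull D\<close>.\<close>
lemma epigraph_separation_parallel:
  fixes G :: "'a::euclidean_space \<Rightarrow> real"
  assumes G: "convex_on D G" and S: "convex S" and x: "x \<in> D" "x \<in> S"
    and min: "\<forall>y\<in>D \<inter> S. G x \<le> G y"
  obtains n \<alpha> where "x + n \<in> affine hull D" "(n, \<alpha>) \<noteq> 0"
    "\<And>p q \<tau> \<sigma>. p \<in> D \<Longrightarrow> G p \<le> \<tau> \<Longrightarrow> q \<in> S \<inter> affine hull D \<Longrightarrow> \<sigma> < G x \<Longrightarrow>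
      0 \<le> n \<bullet> (p - q) + \<alpha> * (\<tau> - \<sigma>)"
proof -
  let ?H = "affine hull D"
  define M where "M = (\<lambda>y. y - x) ` ?H"
  have "subspace M"
    unfolding M_def using x by (intro affine_diffs_subspace_subtract) (auto intro: hull_inc)
  define C where "C = (S \<inter> ?H) \<times> {..<G x}"
  define E where "E = (\<Union>z\<in>epigraph D G. \<Union>w\<in>C. {z - w})"
  have "convex E"
    unfolding E_def C_def using G S
    by (intro convex_differences convex_epigraphI convex_Times convex_Int) auto
  have in_E: "(p, \<tau>) - (q, \<sigma>) \<in> E"
    if "p \<in> D" "G p \<le> \<tau>" "q \<in> S \<inter> ?H" "\<sigma> < G x" for p q \<tau> \<sigma>
  proof -
    have "(p, \<tau>) \<in> epigraph D G" "(q, \<sigma>) \<in> C"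
      using that by (auto simp: mem_epigraph C_def)
    then show ?thesis
      unfolding E_def by blast
  qed
  have "E \<noteq> {}"
    using in_E[of x "G x" x "G x - 1"] x by (auto intro: hull_inc)
  have "0 \<notin> E"
  proof
    assume "0 \<in> E"
    then obtain p \<tau> where "p \<in> D" "G p \<le> \<tau>" "p \<in> S" "\<tau> < G x"
      by (auto simp: E_def C_def epigraph_def)
    with min show False
      by force
  qed
  obtain a where a: "a \<in> span E" "a \<noteq> 0" "\<And>e. e \<in> E \<Longrightarrow> 0 \<le> a \<bullet> e"
    using separating_hyperplane_set_0_inspan[OF \<open>convex E\<close> \<open>E \<noteq> {}\<close> \<open>0 \<notin> E\<close>] by blast
  obtain n \<alpha> where a_eq: "a = (n, \<alpha>)"
    by fastforce
  have "p - q \<in> M" if "p \<in> ?H" "q \<in> ?H" for p q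
  proof -
    have "p - x \<in> M" "q - x \<in> M"
      using that by (auto simp: M_def)
    then show ?thesis
      using subspace_diff[OF \<open>subspace M\<close>] by fastforce
  qed
  then have "E \<subseteq> M \<times> UNIV"
    by (auto simp: E_def C_def epigraph_def hull_inc)
  then have "span E \<subseteq> M \<times> UNIV"
    using \<open>subspace M\<close> by (intro span_minimal subspace_Times) auto
  then have "x + n \<in> ?H"
    using a(1) a_eq by (auto simp: M_def)
  moreover have "0 \<le> n \<bullet> (p - q) + \<alpha> * (\<tau> - \<sigma>)"
    if "p \<in> D" "G p \<le> \<tau>" "q \<in> S \<inter> ?H" "\<sigma> < G x" for p q \<tau> \<sigma>
    using a(3)[OF in_E[OF that]] by (simp add: a_eq)
  ultimately show ?thesis
    using that a(2) a_eq by blast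
qed

lemma constrained_min_subgradient_affine_hull:
  fixes G :: "'a::euclidean_space \<Rightarrow> real"
  assumes G: "convex_on D G" and S: "convex S" and x: "x \<in> D" "x \<in> S"
    and min: "\<forall>y\<in>D \<inter> S. G x \<le> G y" and p0: "p0 \<in> rel_interior D" "p0 \<in> S"
  obtains u where "u \<in> subgradients D G x" "- u \<in> normal_cone (S \<inter> affine hull D) x"
proof -
  obtain n \<alpha> where n: "x + n \<in> affine hull D" and "(n, \<alpha>) \<noteq> 0"
    and sep: "\<And>p q \<tau> \<sigma>. p \<in> D \<Longrightarrow> G p \<le> \<tau> \<Longrightarrow> q \<in> S \<inter> affine hull D \<Longrightarrow> \<sigma> < G x \<Longrightarrow>
      0 \<le> n \<bullet> (p - q) + \<alpha> * (\<tau> - \<sigma>)"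
    using epigraph_separation_parallel[OF G S x min] by blast
  have xH: "x \<in> affine hull D" and p0H: "p0 \<in> affine hull D"
    using x(1) p0(1) rel_interior_subset by (blast intro: hull_inc)+
  have "0 \<le> \<alpha>"
    using sep[of x "G x" x "G x - 1"] x xH by simp
  moreover have "\<alpha> \<noteq> 0"
  proof
    assume "\<alpha> = 0"
    then have "\<forall>p\<in>D. n \<bullet> p0 \<le> n \<bullet> p"
      using sep[OF _ order_refl, of _ p0 "G x - 1"] p0 p0H by (simp add: inner_diff_right)
    with p0(1) xH n have "n = 0"
      by (rule parallel_functional_min_at_rel_interior)
    with \<open>\<alpha> = 0\<close> \<open>(n, \<alpha>) \<noteq> 0\<close> show False
      by (simp add: zero_prod_def)
  qed
  ultimately have "0 < \<alpha>"
    by simp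
  have key: "0 \<le> n \<bullet> (p - q) + \<alpha> * (G p - G x)" if "p \<in> D" "q \<in> S \<inter> affine hull D" for p q
  proof (rule field_le_epsilon)
    fix \<epsilon> :: real
    assume "0 < \<epsilon>"
    with \<open>0 < \<alpha>\<close> have "0 \<le> n \<bullet> (p - q) + \<alpha> * (G p - (G x - \<epsilon> / \<alpha>))"
      by (intro sep that) auto
    with \<open>0 < \<alpha>\<close> show "0 \<le> n \<bullet> (p - q) + \<alpha> * (G p - G x) + \<epsilon>"
      by (simp add: algebra_simps)
  qed
  show ?thesis
  proof (rule that[of "- (1 / \<alpha>) *\<^sub>R n"])
    have "0 \<le> (n \<bullet> (p - x) + \<alpha> * (G p - G x)) / \<alpha>" if "p \<in> D" for p
      using key[OF that] x xH \<open>0 < \<alpha>\<close> by simp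
    with \<open>0 < \<alpha>\<close> show "- (1 / \<alpha>) *\<^sub>R n \<in> subgradients D G x"
      by (auto simp: subgradients_def field_simps)
    have "n \<bullet> (q - x) \<le> 0" if "q \<in> S \<inter> affine hull D" for q
      using key[OF x(1) that] by (simp add: inner_diff_right)
    with \<open>0 < \<alpha>\<close> show "- (- (1 / \<alpha>) *\<^sub>R n) \<in> normal_cone (S \<inter> affine hull D) x"
      by (auto simp: normal_cone_def divide_nonpos_pos)
  qed
qed

theorem constrained_min_subgradient_polyhedron:
  fixes G :: "'a::euclidean_space \<Rightarrow> real"
  assumes G: "convex_on D G" and P: "polyhedron P" and x: "x \<in> D" "x \<in> P"
    and min: "\<forall>y\<in>D \<inter> P. G x \<le> G y" and p0: "p0 \<in> rel_interior D" "p0 \<in> P"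
  obtains u where "u \<in> subgradients D G x" "- u \<in> normal_cone P x"
proof -
  obtain u where u: "u \<in> subgradients D G x" "- u \<in> normal_cone (P \<inter> affine hull D) x"
    using constrained_min_subgradient_affine_hull[OF G polyhedron_imp_convex[OF P] x min p0] .
  obtain n1 n2 where n: "n1 \<in> normal_cone P x" "n2 \<in> normal_cone (affine hull D) x" "- u = n1 + n2"
  proof -
    have "x \<in> affine hull D"
      using x(1) by (rule hull_inc)
    then show ?thesis
      using normal_cone_Int_polyhedra[OF P polyhedron_affine_hull x(2) _ u(2)] that by blast
  qed
  have "- n1 = u + n2"
    using n(3) by (metis add.commute add_diff_cancel_right' diff_minus_eq_add minus_diff_eq)
  moreover have "n2 \<bullet> (y - x) = 0" if "y \<in> D" for y
    using normal_cone_affine[OF affine_affine_hull _ _ n(2)] that x(1) by (simp add: hull_inc)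
  ultimately have "- n1 \<in> subgradients D G x"
    using u(1) by (simp add: subgradients_def inner_add_left)
  with n(1) show ?thesis
    using that by simp
qed

lemma orthogonal_kernel_imp_row_span:
  fixes B :: "real^'n^'r" and r :: "real^'n"
  assumes ker: "\<forall>d. (\<forall>i\<in>I. (B *v d) $ i = 0) \<longrightarrow> r \<bullet> d = 0"
  obtains z where "\<forall>i. i \<notin> I \<longrightarrow> z $ i = 0" "r = transpose B *v z"
proof -
  define Z where "Z = {z::real^'r. \<forall>i. i \<notin> I \<longrightarrow> z $ i = 0}"
  define R where "R = (*v) (transpose B) ` Z"
  have "subspace Z"
    unfolding Z_def subspace_def by auto
  then have "subspace R"
    unfolding R_def by (rule linear_subspace_image[OF matrix_vector_mul_linear])
  obtain y q where yq: "y \<in> span R" "\<And>w. w \<in> span R \<Longrightarrow> orthogonal q w" "r = y + q"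
    using orthogonal_subspace_decomp_exists[of R r] by blast
  have "y \<in> R"
    using yq(1) \<open>subspace R\<close> by (metis span_eq_iff)
  have "(B *v q) $ i = 0" if "i \<in> I" for i
  proof -
    have "axis i 1 \<in> Z"
      unfolding Z_def using that by (auto simp: axis_def)
    then have "transpose B *v axis i 1 \<in> R"
      unfolding R_def by blast
    then have "q \<bullet> (transpose B *v axis i 1) = 0"
      using yq(2) span_base by (fastforce simp: orthogonal_def)
    then have "axis i 1 \<bullet> (B *v q) = 0"
      by (metis inner_commute dot_lmul_matrix vector_transpose_matrix)
    then show ?thesis
      by (simp add: cart_eq_inner_axis inner_commute)
  qed
  then have "r \<bullet> q = 0"
    using ker by blast
  moreover have "y \<bullet> q = 0"
    using yq(2)[OF yq(1)] by (simp add: orthogonal_def inner_commute)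
  ultimately have "q \<bullet> q = 0"
    using yq(3) by (simp add: inner_add_left)
  then have "r \<in> R"
    using yq(3) \<open>y \<in> R\<close> by simp
  with that show ?thesis
    unfolding R_def Z_def by blast
qed

lemma affine_zero_pattern:
  fixes B :: "real^'n^'r"
  shows "affine {x. \<forall>i\<in>I. (B *v x - b) $ i = 0}"
  unfolding affine_def
proof (intro ballI allI impI)
  fix x y :: "real^'n" and u v :: real
  assume x: "x \<in> {x. \<forall>i\<in>I. (B *v x - b) $ i = 0}" and y: "y \<in> {x. \<forall>i\<in>I. (B *v x - b) $ i = 0}"
    and "u + v = 1"
  have comb: "(B *v (u *\<^sub>R x + v *\<^sub>R y) - b) $ i = u * (B *v x - b) $ i + v * (B *v y - b) $ i" for i
    using \<open>u + v = 1\<close>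
    by (simp add: matrix_vector_right_distrib matrix_vector_mult_scaleR algebra_simps)
      (metis add.commute diff_add_cancel distrib_right mult_1)
  show "u *\<^sub>R x + v *\<^sub>R y \<in> {x. \<forall>i\<in>I. (B *v x - b) $ i = 0}"
  proof (intro CollectI ballI)
    fix i
    assume "i \<in> I"
    then have "(B *v x - b) $ i = 0" "(B *v y - b) $ i = 0"
      using x y by auto
    then show "(B *v (u *\<^sub>R x + v *\<^sub>R y) - b) $ i = 0"
      unfolding comb by simp
  qed
qed

lemma proper_fun_finite:
  assumes "proper_fun f" "f x < \<infinity>"
  shows "f x = ereal (real_of_ereal (f x))"
  using assms unfolding proper_fun_def by (cases "f x") auto

lemma convex_on_real_of_convex_fun:
  fixes f :: "'a::real_vector \<Rightarrow> ereal"
  assumes cf: "convex_fun f" and pf: "proper_fun f"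
  shows "convex_on (edom f) (\<lambda>x. real_of_ereal (f x))"
proof -
  have key: "f ((1 - t) *\<^sub>R x + t *\<^sub>R y) < \<infinity> \<and>
      real_of_ereal (f ((1 - t) *\<^sub>R x + t *\<^sub>R y)) \<le> (1 - t) * real_of_ereal (f x) + t * real_of_ereal (f y)"
    if x: "f x < \<infinity>" and y: "f y < \<infinity>" and t: "0 < t" "t < 1" for x y t
  proof -
    obtain a c where a: "f x = ereal a" and c: "f y = ereal c"
      using proper_fun_finite[OF pf x] proper_fun_finite[OF pf y] by blast
    have "f ((1 - t) *\<^sub>R x + t *\<^sub>R y) \<le> ereal ((1 - t) * a + t * c)"
      using cf t unfolding convex_fun_def by (metis a c times_ereal.simps(1) plus_ereal.simps(1))
    moreover have "f ((1 - t) *\<^sub>R x + t *\<^sub>R y) \<noteq> -\<infinity>"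
      using pf unfolding proper_fun_def by blast
    ultimately show ?thesis
      by (cases "f ((1 - t) *\<^sub>R x + t *\<^sub>R y)") (auto simp: a c)
  qed
  have "convex (edom f)"
    unfolding convex_alt edom_def
  proof (intro ballI allI impI)
    fix x y and t :: real
    assume "x \<in> {x. f x < \<infinity>}" "y \<in> {x. f x < \<infinity>}" "0 \<le> t \<and> t \<le> 1"
    then show "(1 - t) *\<^sub>R x + t *\<^sub>R y \<in> {x. f x < \<infinity>}"
      using key[of x y t] by (cases "t = 0 \<or> t = 1") auto
  qed
  then show ?thesis
    using key by (intro convex_onI) (auto simp: edom_def)
qed

section \<open>Stationary points are local minimisers\<close>

lemma Phi0_local_subgradient:
  fixes u z lam :: "real^'r"
  assumes lam: "\<forall>i. lam $ i > 0" and z: "z \<in> subdiff_Phi0 u"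
  obtains d where "0 < d" "\<And>e. norm e < d \<Longrightarrow> Phi0 lam u + z \<bullet> e \<le> Phi0 lam (u + e)"
proof -
  \<comment> \<open>small enough to keep nonzero entries of \<open>u\<close> nonzero, and to make \<open>z $ i * e $ i < lam $ i\<close>\<close>
  define \<delta> where "\<delta> i = (if u $ i \<noteq> 0 then \<bar>u $ i\<bar> else lam $ i / (\<bar>z $ i\<bar> + 1))" for i
  have "0 < \<delta> i" for i
    unfolding \<delta>_def using lam by (auto intro!: divide_pos_pos add_nonneg_pos)
  define d where "d = Min (range \<delta>)"
  have "0 < d"
    unfolding d_def using \<open>\<And>i. 0 < \<delta> i\<close> by (subst Min_gr_iff) auto
  moreover have "Phi0 lam u + z \<bullet> e \<le> Phi0 lam (u + e)" if "norm e < d" for e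
  proof -
    have "(if u $ i \<noteq> 0 then lam $ i else 0) + z $ i * e $ i \<le> (if (u + e) $ i \<noteq> 0 then lam $ i else 0)"
      for i
    proof -
      have "d \<le> \<delta> i"
        unfolding d_def by (rule Min_le) auto
      then have "\<bar>e $ i\<bar> < \<delta> i"
        using component_le_norm_cart[of e i] that by linarith
      show ?thesis
      proof (cases "u $ i \<noteq> 0")
        case True
        then have "(u + e) $ i \<noteq> 0"
          using \<open>\<bar>e $ i\<bar> < \<delta> i\<close> by (auto simp: \<delta>_def)
        with True z show ?thesis
          by (simp add: subdiff_Phi0_def)
      next
        case False
        have "z $ i * e $ i \<le> \<bar>z $ i\<bar> * \<bar>e $ i\<bar>"
          by (metis abs_ge_self abs_mult)
        also have "\<dots> \<le> (\<bar>z $ i\<bar> + 1) * \<bar>e $ i\<bar>"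
          by (simp add: mult_right_mono)
        also have "\<dots> < lam $ i"
          using \<open>\<bar>e $ i\<bar> < \<delta> i\<close> False by (simp add: \<delta>_def field_simps add_nonneg_pos)
        finally show ?thesis
          using False by auto
      qed
    qed
    then have "(\<Sum>i\<in>UNIV. (if u $ i \<noteq> 0 then lam $ i else 0) + z $ i * e $ i) \<le> Phi0 lam (u + e)"
      unfolding Phi0_def by (rule sum_mono)
    then show ?thesis
      by (simp add: Phi0_def inner_vec_def sum.distrib)
  qed
  ultimately show ?thesis
    using that by blast
qed

lemma stationary_imp_local_min:
  fixes f :: "real^'n \<Rightarrow> ereal" and g :: "real^'m \<Rightarrow> ereal"
    and A :: "real^'n^'m" and B :: "real^'n^'r" and b lam :: "real^'r"
  assumes pf: "proper_fun f" and pg: "proper_fun g" and lam: "\<forall>i. lam $ i > 0"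
    and st: "stationary_P f g A B b x"
  shows "local_min (Fobj f g A B b lam) x"
proof -
  obtain v w z where v: "v \<in> csubdiff f x" and w: "w \<in> csubdiff g (A *v x)"
    and z: "z \<in> subdiff_Phi0 (B *v x - b)" and vwz: "v + transpose A *v w + transpose B *v z = 0"
    using st unfolding stationary_P_def by blast
  obtain d where "0 < d"
    and d: "\<And>e. norm e < d \<Longrightarrow> Phi0 lam (B *v x - b) + z \<bullet> e \<le> Phi0 lam (B *v x - b + e)"
    using Phi0_local_subgradient[OF lam z] by blast
  have "isCont ((*v) B) x"
    by (simp add: linear_continuous_at matrix_vector_mul_linear)
  then obtain \<epsilon> where "0 < \<epsilon>" and \<epsilon>: "\<And>y. dist y x < \<epsilon> \<Longrightarrow> dist (B *v y) (B *v x) < d"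
    using \<open>0 < d\<close> unfolding continuous_at_eps_delta by blast
  have "f x < \<infinity>" "g (A *v x) < \<infinity>"
    using v w by (simp_all add: csubdiff_def)
  then obtain rf rg where rf: "f x = ereal rf" and rg: "g (A *v x) = ereal rg"
    using proper_fun_finite[OF pf] proper_fun_finite[OF pg] by metis
  have "Fobj f g A B b lam x \<le> Fobj f g A B b lam y" if "y \<in> ball x \<epsilon>" for y
  proof -
    define e where "e = B *v y - B *v x"
    have "v \<bullet> (y - x) + w \<bullet> (A *v y - A *v x) + z \<bullet> e
        = (v + transpose A *v w + transpose B *v z) \<bullet> (y - x)"
      by (simp add: e_def inner_add_left dot_lmul_matrix matrix_vector_mult_diff_distrib)
    then have sum0: "v \<bullet> (y - x) + w \<bullet> (A *v y - A *v x) + z \<bullet> e = 0"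
      using vwz by simp
    have "Fobj f g A B b lam x = (f x + ereal (v \<bullet> (y - x))) + (g (A *v x) + ereal (w \<bullet> (A *v y - A *v x)))
        + ereal (Phi0 lam (B *v x - b) + z \<bullet> e)"
    proof -
      have "rf + rg + Phi0 lam (B *v x - b) = (rf + v \<bullet> (y - x)) + (rg + w \<bullet> (A *v y - A *v x))
          + (Phi0 lam (B *v x - b) + z \<bullet> e)"
        using sum0 by linarith
      then show ?thesis
        by (simp add: Fobj_def rf rg)
    qed
    also have "\<dots> \<le> f y + g (A *v y) + ereal (Phi0 lam (B *v y - b))"
    proof (intro add_mono)
      show "f x + ereal (v \<bullet> (y - x)) \<le> f y" "g (A *v x) + ereal (w \<bullet> (A *v y - A *v x)) \<le> g (A *v y)"
        using v w by (simp_all add: csubdiff_def)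
      have "norm e < d"
        using \<epsilon>[of y] that by (simp add: e_def dist_norm norm_minus_commute)
      then show "ereal (Phi0 lam (B *v x - b) + z \<bullet> e) \<le> ereal (Phi0 lam (B *v y - b))"
        using d[of e] by (simp add: e_def)
    qed
    finally show ?thesis
      by (simp add: Fobj_def)
  qed
  with \<open>0 < \<epsilon>\<close> show ?thesis
    unfolding local_min_def by blast
qed

section \<open>Local minimisers are stationary\<close>

lemma Fobj_less_infinityD:
  assumes "proper_fun f" "proper_fun g" "Fobj f g A B b lam x < \<infinity>"
  shows "f x < \<infinity>" "g (A *v x) < \<infinity>"
  using assms by (cases "f x"; cases "g (A *v x)"; auto simp: Fobj_def proper_fun_def)+

lemma Phi0_eventually_eq_on_zero_pattern:
  fixes B :: "real^'n^'r" and b lam :: "real^'r"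
  shows "\<forall>\<^sub>F y in nhds x. (\<forall>i. (B *v x - b) $ i = 0 \<longrightarrow> (B *v y - b) $ i = 0) \<longrightarrow>
    Phi0 lam (B *v y - b) = Phi0 lam (B *v x - b)"
proof -
  have "\<forall>\<^sub>F y in nhds x. (B *v x - b) $ i \<noteq> 0 \<longrightarrow> (B *v y - b) $ i \<noteq> 0" for i
  proof (cases "(B *v x - b) $ i = 0")
    case False
    have "isCont (\<lambda>y. (B *v y - b) $ i) x"
      by (intro continuous_intros)
    then have "((\<lambda>y. (B *v y - b) $ i) \<longlongrightarrow> (B *v x - b) $ i) (nhds x)"
      by (simp add: isCont_def tendsto_nhds_iff)
    from tendsto_imp_eventually_ne[OF this False] show ?thesis
      by (rule eventually_mono) simp
  qed simp
  then have "\<forall>\<^sub>F y in nhds x. \<forall>i. (B *v x - b) $ i \<noteq> 0 \<longrightarrow> (B *v y - b) $ i \<noteq> 0"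
    by (rule eventually_all_finite)
  then show ?thesis
  proof (rule eventually_mono, intro impI)
    fix y
    assume "\<forall>i. (B *v x - b) $ i \<noteq> 0 \<longrightarrow> (B *v y - b) $ i \<noteq> 0"
      and "\<forall>i. (B *v x - b) $ i = 0 \<longrightarrow> (B *v y - b) $ i = 0"
    then have "(B *v y - b) $ i \<noteq> 0 \<longleftrightarrow> (B *v x - b) $ i \<noteq> 0" for i
      by blast
    then show "Phi0 lam (B *v y - b) = Phi0 lam (B *v x - b)"
      unfolding Phi0_def by simp
  qed
qed

lemma local_min_imp_local_min_on_zero_pattern:
  fixes f :: "real^'n \<Rightarrow> ereal" and g :: "real^'m \<Rightarrow> ereal"
    and A :: "real^'n^'m" and B :: "real^'n^'r" and b lam :: "real^'r"
  assumes "local_min (Fobj f g A B b lam) xs"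
  obtains e where "0 < e" "\<And>y. y \<in> ball xs e \<Longrightarrow> \<forall>i. (B *v xs - b) $ i = 0 \<longrightarrow> (B *v y - b) $ i = 0 \<Longrightarrow>
    f xs + g (A *v xs) \<le> f y + g (A *v y)"
proof -
  have "\<forall>\<^sub>F y in nhds xs. Fobj f g A B b lam xs \<le> Fobj f g A B b lam y \<and>
      ((\<forall>i. (B *v xs - b) $ i = 0 \<longrightarrow> (B *v y - b) $ i = 0) \<longrightarrow>
        Phi0 lam (B *v y - b) = Phi0 lam (B *v xs - b))"
    using assms Phi0_eventually_eq_on_zero_pattern[where x = xs and B = B and b = b and lam = lam]
    unfolding local_min_def eventually_nhds_metric eventually_conj_iff
    by (auto simp: dist_commute)
  then obtain e where "0 < e"
    and e: "\<And>y. dist y xs < e \<Longrightarrow> Fobj f g A B b lam xs \<le> Fobj f g A B b lam y \<and>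
      ((\<forall>i. (B *v xs - b) $ i = 0 \<longrightarrow> (B *v y - b) $ i = 0) \<longrightarrow>
        Phi0 lam (B *v y - b) = Phi0 lam (B *v xs - b))"
    unfolding eventually_nhds_metric by blast
  have "f xs + g (A *v xs) \<le> f y + g (A *v y)"
    if "y \<in> ball xs e" "\<forall>i. (B *v xs - b) $ i = 0 \<longrightarrow> (B *v y - b) $ i = 0" for y
  proof -
    have "Fobj f g A B b lam xs \<le> Fobj f g A B b lam y" "Phi0 lam (B *v y - b) = Phi0 lam (B *v xs - b)"
      using e[of y] that by (auto simp: dist_commute)
    then have "f xs + g (A *v xs) + ereal (Phi0 lam (B *v xs - b))
        \<le> f y + g (A *v y) + ereal (Phi0 lam (B *v xs - b))"
      by (simp add: Fobj_def)
    then show ?thesis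
      by (simp add: ereal_add_le_add_iff2)
  qed
  with \<open>0 < e\<close> show ?thesis
    using that by blast
qed

lemma convex_on_real_sum_linear:
  fixes f :: "real^'n \<Rightarrow> ereal" and g :: "real^'m \<Rightarrow> ereal" and A :: "real^'n^'m"
  assumes "proper_fun f" "convex_fun f" "proper_fun g" "convex_fun g"
  shows "convex_on (edom f \<inter> (*v) A -` edom g) (\<lambda>y. real_of_ereal (f y) + real_of_ereal (g (A *v y)))"
proof -
  have cvf: "convex_on (edom f) (\<lambda>y. real_of_ereal (f y))"
    and cvg: "convex_on ((*v) A -` edom g) (\<lambda>y. real_of_ereal (g (A *v y)))"
    using assms convex_on_linear_vimage[OF convex_on_real_of_convex_fun matrix_vector_mul_linear]
    by (auto intro: convex_on_real_of_convex_fun)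
  then have "convex (edom f \<inter> (*v) A -` edom g)"
    by (intro convex_Int) (auto dest: convex_on_imp_convex)
  with cvf cvg show ?thesis
    by (intro convex_on_add) (auto elim: convex_on_subset)
qed

lemma local_min_imp_min_on_zero_pattern:
  fixes f :: "real^'n \<Rightarrow> ereal" and g :: "real^'m \<Rightarrow> ereal"
    and A :: "real^'n^'m" and B :: "real^'n^'r" and b lam :: "real^'r"
  assumes pf: "proper_fun f" and cf: "convex_fun f" and pg: "proper_fun g" and cg: "convex_fun g"
    and lm: "local_min (Fobj f g A B b lam) xs" and fin: "Fobj f g A B b lam xs < \<infinity>"
    and x: "\<forall>i. (B *v xs - b) $ i = 0 \<longrightarrow> (B *v x - b) $ i = 0"
  shows "f xs + g (A *v xs) \<le> f x + g (A *v x)"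
proof -
  define L where "L = {x. \<forall>i\<in>{i. (B *v xs - b) $ i = 0}. (B *v x - b) $ i = 0}"
  define C where "C = L \<inter> (edom f \<inter> (*v) A -` edom g)"
  define h where "h y = real_of_ereal (f y) + real_of_ereal (g (A *v y))" for y
  have h_eq: "f y + g (A *v y) = ereal (h y)" if "y \<in> edom f" "A *v y \<in> edom g" for y
    using that proper_fun_finite[OF pf] proper_fun_finite[OF pg]
    by (metis edom_def h_def mem_Collect_eq plus_ereal.simps(1))
  have "xs \<in> C"
    using Fobj_less_infinityD[OF pf pg fin] by (simp add: C_def L_def edom_def)
  have "convex L"
    unfolding L_def by (rule affine_imp_convex[OF affine_zero_pattern])
  moreover have cv: "convex_on (edom f \<inter> (*v) A -` edom g) h"
    unfolding h_def by (rule convex_on_real_sum_linear[OF pf cf pg cg])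
  ultimately have "convex_on C h"
    unfolding C_def by (intro convex_on_subset[OF cv] convex_Int convex_on_imp_convex[OF cv]) auto
  obtain e where "0 < e" and e: "\<And>y. y \<in> ball xs e \<Longrightarrow> \<forall>i. (B *v xs - b) $ i = 0 \<longrightarrow> (B *v y - b) $ i = 0 \<Longrightarrow>
    f xs + g (A *v xs) \<le> f y + g (A *v y)"
    using local_min_imp_local_min_on_zero_pattern[OF lm] by blast
  have "h xs \<le> h y" if "y \<in> C \<inter> ball xs e" for y
    using e[of y] that \<open>xs \<in> C\<close> h_eq by (simp add: C_def L_def)
  then have min: "h xs \<le> h y" if "y \<in> C" for y
    using convex_on_local_min_imp_min[OF \<open>convex_on C h\<close> \<open>xs \<in> C\<close> \<open>0 < e\<close>] that by blast
  show ?thesis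
  proof (cases "x \<in> C")
    case True
    then show ?thesis
      using min[OF True] h_eq \<open>xs \<in> C\<close> by (simp add: C_def)
  next
    case False
    then have "f x + g (A *v x) = \<infinity>"
      using x pf pg by (auto simp: C_def L_def edom_def proper_fun_def)
    then show ?thesis
      by (metis ereal_less_eq(1))
  qed
qed

text \<open>A polyhedral \<open>f\<close> is encoded by its epigraph as a polyhedral constraint, which the Slater
  point only has to satisfy; any other \<open>f\<close> stays in the objective, and then the Slater point must
  lie in the relative interior of its domain.\<close>
definition lift_dom :: "('a::euclidean_space \<Rightarrow> ereal) \<Rightarrow> ('a \<times> real) set" where
  "lift_dom f = (if polyhedral_fun f then UNIV else edom f \<times> UNIV)"

definition lift_obj :: "('a::euclidean_space \<Rightarrow> ereal) \<Rightarrow> 'a \<times> real \<Rightarrow> real" where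
  "lift_obj f p = (if polyhedral_fun f then snd p else real_of_ereal (f (fst p)))"

definition lift_cons :: "('a::euclidean_space \<Rightarrow> ereal) \<Rightarrow> ('a \<times> real) set" where
  "lift_cons f = (if polyhedral_fun f then {(x, s). f x \<le> ereal s} else UNIV)"

definition lift_pt :: "('a::euclidean_space \<Rightarrow> ereal) \<Rightarrow> 'a \<Rightarrow> 'a \<times> real" where
  "lift_pt f x = (x, real_of_ereal (f x))"

lemma convex_on_lift_obj:
  assumes "convex_fun f" "proper_fun f"
  shows "convex_on (lift_dom f) (lift_obj f)"
proof (cases "polyhedral_fun f")
  case True
  have "convex_on UNIV (snd :: 'a \<times> real \<Rightarrow> real)"
    by (rule convex_onI) (auto simp: algebra_simps)
  moreover have "lift_obj f = snd"
    using True by (simp add: fun_eq_iff lift_obj_def)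
  ultimately show ?thesis
    using True by (simp add: lift_dom_def)
next
  case False
  have "convex_on (fst -` edom f) (\<lambda>p. real_of_ereal (f (fst p)))"
    by (rule convex_on_linear_vimage[OF convex_on_real_of_convex_fun[OF assms] linear_fst])
  also have "fst -` edom f = lift_dom f"
    using False by (auto simp: lift_dom_def)
  also have "(\<lambda>p. real_of_ereal (f (fst p))) = lift_obj f"
    using False by (simp add: fun_eq_iff lift_obj_def)
  finally show ?thesis .
qed

lemma polyhedron_lift_cons: "polyhedron (lift_cons f)"
  by (simp add: lift_cons_def polyhedral_fun_def)

lemma lift_obj_bound:
  assumes "proper_fun f" "p \<in> lift_dom f" "p \<in> lift_cons f"
  shows "f (fst p) \<le> ereal (lift_obj f p)"
  using assms proper_fun_finite[OF assms(1), of "fst p"]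
  by (cases p) (auto simp: lift_dom_def lift_cons_def lift_obj_def edom_def split: if_splits)

lemma lift_pt_mem:
  assumes "proper_fun f" "f x < \<infinity>"
  shows "lift_pt f x \<in> lift_dom f" "lift_pt f x \<in> lift_cons f"
  using proper_fun_finite[OF assms] assms(2)
  by (auto simp: lift_pt_def lift_dom_def lift_cons_def edom_def)

lemma lift_obj_lift_pt [simp]: "lift_obj f (lift_pt f x) = real_of_ereal (f x)"
  by (simp add: lift_pt_def lift_obj_def)

lemma rel_interior_lift_dom:
  assumes "convex_fun f" "proper_fun f"
    and "if polyhedral_fun f then x \<in> edom f else x \<in> rel_interior (edom f)"
  shows "(x, s) \<in> rel_interior (lift_dom f)"
proof (cases "polyhedral_fun f")
  case False
  have "convex (edom f)"
    using convex_on_real_of_convex_fun[OF assms(1,2)] by (rule convex_on_imp_convex)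
  then have "rel_interior (lift_dom f) = rel_interior (edom f) \<times> UNIV"
    using False by (simp add: lift_dom_def rel_interior_Times)
  with False assms(3) show ?thesis
    by simp
qed (simp add: lift_dom_def)

lemma csubdiff_of_lift:
  assumes pf: "proper_fun f" and fx: "f x = ereal s"
    and u: "(u, \<mu>) \<in> subgradients (lift_dom f) (lift_obj f) (x, s)"
    and n: "(a, \<sigma>) \<in> normal_cone (lift_cons f) (x, s)" and "\<mu> + \<sigma> = 0"
  shows "u + a \<in> csubdiff f x"
proof (cases "polyhedral_fun f")
  case True
  have "(u, \<mu> - 1) \<in> normal_cone UNIV (x, s)"
    using u True by (auto simp: normal_cone_def subgradients_def lift_dom_def lift_obj_def
        inner_prod_def algebra_simps)
  then have "u = 0" "\<sigma> = -1"
    using \<open>\<mu> + \<sigma> = 0\<close> by (auto simp: normal_cone_UNIV zero_prod_def)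
  have "f x + ereal (a \<bullet> (y - x)) \<le> f y" for y
  proof (cases "f y = \<infinity>")
    case False
    then have "f y < \<infinity>"
      by (cases "f y") auto
    then obtain r where r: "f y = ereal r"
      using proper_fun_finite[OF pf] by blast
    then have "(y, r) \<in> lift_cons f"
      using True by (simp add: lift_cons_def)
    with n \<open>\<sigma> = -1\<close> have "a \<bullet> (y - x) - (r - s) \<le> 0"
      by (auto simp: normal_cone_def inner_prod_def)
    then show ?thesis
      by (simp add: fx r)
  qed simp
  with \<open>u = 0\<close> fx show ?thesis
    by (simp add: csubdiff_def)
next
  case False
  have "(a, \<sigma>) = 0"
    using n False by (simp add: lift_cons_def normal_cone_UNIV)
  then have "a = 0" "\<mu> = 0"
    using \<open>\<mu> + \<sigma> = 0\<close> by (simp_all add: zero_prod_def)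
  have "f x + ereal (u \<bullet> (y - x)) \<le> f y" for y
  proof (cases "f y = \<infinity>")
    case False
    then have "f y < \<infinity>"
      by (cases "f y") auto
    then obtain r where r: "f y = ereal r"
      using proper_fun_finite[OF pf] by blast
    then have "(y, s) \<in> lift_dom f"
      using \<open>\<not> polyhedral_fun f\<close> by (simp add: lift_dom_def edom_def)
    with u \<open>\<mu> = 0\<close> have "s + u \<bullet> (y - x) \<le> r"
      using \<open>\<not> polyhedral_fun f\<close> by (auto simp: subgradients_def lift_obj_def inner_prod_def fx r)
    then show ?thesis
      by (simp add: fx r)
  qed simp
  with \<open>a = 0\<close> fx show ?thesis
    by (simp add: csubdiff_def)
qed

definition coupling_set :: "real^'n^'m \<Rightarrow> real^'n^'r \<Rightarrow> real^'r \<Rightarrow> 'r set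
    \<Rightarrow> (((real^'n) \<times> real) \<times> ((real^'m) \<times> real)) set" where
  "coupling_set A B b I = {((x, s), (y, t)). y = A *v x \<and> (\<forall>i\<in>I. (B *v x - b) $ i = 0)}"

lemma affine_coupling_set:
  fixes A :: "real^'n^'m" and B :: "real^'n^'r"
  shows "affine (coupling_set A B b I)"
  unfolding affine_def
proof (intro ballI allI impI)
  fix p q and u v :: real
  assume p: "p \<in> coupling_set A B b I" and q: "q \<in> coupling_set A B b I" and "u + v = 1"
  obtain x s y t x' s' y' t' where pq: "p = ((x, s), (y, t))" "q = ((x', s'), (y', t'))"
    by (metis surj_pair)
  have "y = A *v x" "y' = A *v x'"
    using p q by (simp_all add: pq coupling_set_def)
  then have "u *\<^sub>R y + v *\<^sub>R y' = A *v (u *\<^sub>R x + v *\<^sub>R x')"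
    by (simp add: matrix_vector_right_distrib matrix_vector_mult_scaleR)
  moreover have "u *\<^sub>R x + v *\<^sub>R x' \<in> {x. \<forall>i\<in>I. (B *v x - b) $ i = 0}"
    using affine_zero_pattern[of I B b] p q \<open>u + v = 1\<close>
    unfolding affine_def by (simp add: pq coupling_set_def)
  ultimately show "u *\<^sub>R p + v *\<^sub>R q \<in> coupling_set A B b I"
    by (simp add: pq coupling_set_def)
qed

lemma normal_cone_coupling_set:
  assumes x: "\<forall>i\<in>I. (B *v x - b) $ i = 0"
    and k: "((k1, \<sigma>), (k2, \<tau>)) \<in> normal_cone (coupling_set A B b I) ((x, s), (A *v x, t))"
  shows "\<sigma> = 0" "\<tau> = 0" "\<forall>d. (\<forall>i\<in>I. (B *v d) $ i = 0) \<longrightarrow> (k1 + transpose A *v k2) \<bullet> d = 0"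
proof -
  have orth: "((k1, \<sigma>), (k2, \<tau>)) \<bullet> (((x', s'), (A *v x', t')) - ((x, s), (A *v x, t))) = 0"
    if "\<forall>i\<in>I. (B *v x' - b) $ i = 0" for x' s' t'
  proof -
    have "((x, s), (A *v x, t)) \<in> coupling_set A B b I" "((x', s'), (A *v x', t')) \<in> coupling_set A B b I"
      using x that by (simp_all add: coupling_set_def)
    from normal_cone_affine[OF affine_coupling_set this k] show ?thesis .
  qed
  show "\<sigma> = 0"
    using orth[OF x, of "s + 1" t] by (simp add: inner_prod_def)
  show "\<tau> = 0"
    using orth[OF x, of s "t + 1"] by (simp add: inner_prod_def)
  show "\<forall>d. (\<forall>i\<in>I. (B *v d) $ i = 0) \<longrightarrow> (k1 + transpose A *v k2) \<bullet> d = 0"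
  proof (intro allI impI)
    fix d
    assume "\<forall>i\<in>I. (B *v d) $ i = 0"
    with x have "\<forall>i\<in>I. (B *v (x + d) - b) $ i = 0"
      by (simp add: matrix_vector_right_distrib)
    from orth[OF this, of s t] show "(k1 + transpose A *v k2) \<bullet> d = 0"
      by (simp add: inner_prod_def inner_add_left matrix_vector_right_distrib dot_lmul_matrix
          vector_transpose_matrix)
  qed
qed

lemma lifted_min:
  fixes f :: "real^'n \<Rightarrow> ereal" and g :: "real^'m \<Rightarrow> ereal"
    and A :: "real^'n^'m" and B :: "real^'n^'r" and b lam :: "real^'r"
  assumes pf: "proper_fun f" and cf: "convex_fun f" and pg: "proper_fun g" and cg: "convex_fun g"
    and lm: "local_min (Fobj f g A B b lam) xs" and fin: "Fobj f g A B b lam xs < \<infinity>"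
    and p: "p \<in> (lift_dom f \<times> lift_dom g) \<inter>
      ((lift_cons f \<times> lift_cons g) \<inter> coupling_set A B b {i. (B *v xs - b) $ i = 0})"
  shows "lift_obj f (lift_pt f xs) + lift_obj g (lift_pt g (A *v xs)) \<le> lift_obj f (fst p) + lift_obj g (snd p)"
proof -
  obtain x s y t where p_eq: "p = ((x, s), (y, t))"
    by (metis surj_pair)
  have "y = A *v x" and "\<forall>i. (B *v xs - b) $ i = 0 \<longrightarrow> (B *v x - b) $ i = 0"
    using p by (auto simp: p_eq coupling_set_def)
  then have "ereal (real_of_ereal (f xs) + real_of_ereal (g (A *v xs))) \<le> f x + g y"
    using local_min_imp_min_on_zero_pattern[OF pf cf pg cg lm fin] Fobj_less_infinityD[OF pf pg fin]
      proper_fun_finite[OF pf] proper_fun_finite[OF pg]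
    by (metis plus_ereal.simps(1))
  also have "\<dots> \<le> ereal (lift_obj f (x, s)) + ereal (lift_obj g (y, t))"
    using p lift_obj_bound[OF pf, of "(x, s)"] lift_obj_bound[OF pg, of "(y, t)"]
    by (intro add_mono) (auto simp: p_eq)
  finally show ?thesis
    by (simp add: p_eq)
qed

lemma local_min_imp_lifted_kkt:
  fixes f :: "real^'n \<Rightarrow> ereal" and g :: "real^'m \<Rightarrow> ereal"
    and A :: "real^'n^'m" and B :: "real^'n^'r" and b lam :: "real^'r"
  assumes pf: "proper_fun f" and cf: "convex_fun f" and pg: "proper_fun g" and cg: "convex_fun g"
    and lm: "local_min (Fobj f g A B b lam) xs" and fin: "Fobj f g A B b lam xs < \<infinity>"
    and x0: "if polyhedral_fun f then x0 \<in> edom f else x0 \<in> rel_interior (edom f)"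
      "if polyhedral_fun g then A *v x0 \<in> edom g else A *v x0 \<in> rel_interior (edom g)"
      "\<forall>i. (B *v xs - b) $ i = 0 \<longrightarrow> (B *v x0 - b) $ i = 0"
  obtains u where
    "u \<in> subgradients (lift_dom f \<times> lift_dom g) (\<lambda>p. lift_obj f (fst p) + lift_obj g (snd p))
      (lift_pt f xs, lift_pt g (A *v xs))"
    "- u \<in> normal_cone ((lift_cons f \<times> lift_cons g) \<inter> coupling_set A B b {i. (B *v xs - b) $ i = 0})
      (lift_pt f xs, lift_pt g (A *v xs))"
proof -
  define D where "D = lift_dom f \<times> lift_dom g"
  define G where "G = (\<lambda>p. lift_obj f (fst p) + lift_obj g (snd p))"
  define P where "P = (lift_cons f \<times> lift_cons g) \<inter> coupling_set A B b {i. (B *v xs - b) $ i = 0}"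
  define lift where "lift x = (lift_pt f x, lift_pt g (A *v x))" for x
  have lift_in: "lift x \<in> D \<inter> P"
    if "f x < \<infinity>" "g (A *v x) < \<infinity>" "\<forall>i. (B *v xs - b) $ i = 0 \<longrightarrow> (B *v x - b) $ i = 0" for x
    using that lift_pt_mem[OF pf] lift_pt_mem[OF pg]
    by (simp add: lift_def D_def P_def coupling_set_def lift_pt_def)
  have "convex_on D G"
    unfolding D_def G_def
    by (rule convex_on_Times_add[OF convex_on_lift_obj[OF cf pf] convex_on_lift_obj[OF cg pg]])
  moreover have "polyhedron P"
    unfolding P_def
    by (intro polyhedron_Int polyhedron_Times polyhedron_lift_cons affine_imp_polyhedron affine_coupling_set)
  moreover have "lift xs \<in> D \<inter> P"
    using Fobj_less_infinityD[OF pf pg fin] by (intro lift_in) auto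
  moreover have "lift x0 \<in> D \<inter> P"
    using x0 by (intro lift_in) (auto simp: edom_def split: if_splits dest: rel_interior_subset[THEN subsetD])
  moreover have "lift x0 \<in> rel_interior D"
    using rel_interior_lift_dom[OF cf pf x0(1)] rel_interior_lift_dom[OF cg pg x0(2)]
      convex_on_imp_convex[OF convex_on_lift_obj[OF cf pf]] convex_on_imp_convex[OF convex_on_lift_obj[OF cg pg]]
    by (simp add: D_def lift_def lift_pt_def rel_interior_Times)
  moreover have "G (lift xs) \<le> G p" if "p \<in> D \<inter> P" for p
    using lifted_min[OF pf cf pg cg lm fin] that by (simp add: G_def D_def P_def lift_def)
  ultimately show ?thesis
    using constrained_min_subgradient_polyhedron[of D G P "lift xs" "lift x0"] that
    unfolding D_def G_def P_def lift_def by blast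
qed

lemma lifted_kkt_imp_stationary:
  fixes f :: "real^'n \<Rightarrow> ereal" and g :: "real^'m \<Rightarrow> ereal"
    and A :: "real^'n^'m" and B :: "real^'n^'r" and b :: "real^'r"
  assumes pf: "proper_fun f" and pg: "proper_fun g" and fxs: "f xs < \<infinity>" and gxs: "g (A *v xs) < \<infinity>"
    and u: "u \<in> subgradients (lift_dom f \<times> lift_dom g) (\<lambda>p. lift_obj f (fst p) + lift_obj g (snd p))
      (lift_pt f xs, lift_pt g (A *v xs))"
    and nu: "- u \<in> normal_cone ((lift_cons f \<times> lift_cons g) \<inter> coupling_set A B b {i. (B *v xs - b) $ i = 0})
      (lift_pt f xs, lift_pt g (A *v xs))"
  shows "stationary_P f g A B b xs"
proof -
  define I where "I = {i. (B *v xs - b) $ i = 0}"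
  have mem: "lift_pt f xs \<in> lift_dom f" "lift_pt g (A *v xs) \<in> lift_dom g"
    "lift_pt f xs \<in> lift_cons f" "lift_pt g (A *v xs) \<in> lift_cons g"
    using lift_pt_mem[OF pf fxs] lift_pt_mem[OF pg gxs] by auto
  have xs: "\<forall>i\<in>I. (B *v xs - b) $ i = 0"
    by (simp add: I_def)
  then have "(lift_pt f xs, lift_pt g (A *v xs)) \<in> coupling_set A B b I"
    by (simp add: lift_pt_def coupling_set_def)
  then obtain n k where n: "n \<in> normal_cone (lift_cons f \<times> lift_cons g) (lift_pt f xs, lift_pt g (A *v xs))"
    and k: "k \<in> normal_cone (coupling_set A B b I) (lift_pt f xs, lift_pt g (A *v xs))" and "- u = n + k"
    using mem(3,4) by (auto intro: normal_cone_Int_polyhedra[OF polyhedron_Times[OF polyhedron_lift_cons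
        polyhedron_lift_cons] affine_imp_polyhedron[OF affine_coupling_set] _ _ nu[folded I_def]])
  obtain u1 \<mu>1 u2 \<mu>2 a1 \<sigma>1 a2 \<sigma>2 k1 \<sigma> k2 \<tau> where
    uu: "u = ((u1, \<mu>1), (u2, \<mu>2))" and nn: "n = ((a1, \<sigma>1), (a2, \<sigma>2))" and kk: "k = ((k1, \<sigma>), (k2, \<tau>))"
    by (metis surj_pair)
  note u_parts = subgradients_Times[OF u mem(1,2), unfolded uu]
  note n_parts = normal_cone_Times[OF n mem(3,4), unfolded nn]
  note k_parts = normal_cone_coupling_set[OF xs k[unfolded kk lift_pt_def]]
  have sums: "- u1 = a1 + k1" "- \<mu>1 = \<sigma>1 + \<sigma>" "- u2 = a2 + k2" "- \<mu>2 = \<sigma>2 + \<tau>"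
    using \<open>- u = n + k\<close> by (simp_all add: uu nn kk)
  have "u1 + a1 \<in> csubdiff f xs"
    using csubdiff_of_lift[OF pf proper_fun_finite[OF pf fxs]] u_parts(1) n_parts(1) sums(2) k_parts(1)
    by (simp add: lift_pt_def)
  moreover have "u2 + a2 \<in> csubdiff g (A *v xs)"
    using csubdiff_of_lift[OF pg proper_fun_finite[OF pg gxs]] u_parts(2) n_parts(2) sums(4) k_parts(2)
    by (simp add: lift_pt_def)
  moreover obtain z where z: "\<forall>i. i \<notin> I \<longrightarrow> z $ i = 0" "k1 + transpose A *v k2 = transpose B *v z"
    using orthogonal_kernel_imp_row_span[OF k_parts(3)] by blast
  moreover have "z \<in> subdiff_Phi0 (B *v xs - b)"
    using z(1) by (simp add: subdiff_Phi0_def I_def)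
  moreover have "u1 + a1 = - k1" "u2 + a2 = - k2"
    using sums(1,3) by (simp_all add: eq_neg_iff_add_eq_0 neg_eq_iff_add_eq_0 algebra_simps)
  moreover have "- k1 + transpose A *v (- k2) + transpose B *v z = 0"
    using z(2)[symmetric] by (simp add: linear_neg[OF matrix_vector_mul_linear])
  ultimately show ?thesis
    unfolding stationary_P_def by metis
qed

theorem mainTheorem12:
  fixes f :: "real^'n \<Rightarrow> ereal" and g :: "real^'m \<Rightarrow> ereal"
    and A :: "real^'n^'m" and B :: "real^'n^'r" and b lam :: "real^'r"
  assumes f: "proper_fun f" "lsc_fun f" "convex_fun f"
    and g: "proper_fun g" "lsc_fun g" "convex_fun g"
    and lam: "\<forall>i. lam $ i > 0"
  shows "(\<forall>x. stationary_P f g A B b x \<longrightarrow> local_min (Fobj f g A B b lam) x)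
    \<and> (\<forall>xs. local_min (Fobj f g A B b lam) xs \<and> Fobj f g A B b lam xs < \<infinity> \<and>
           (\<exists>x. (if polyhedral_fun f then x \<in> edom f else x \<in> rel_interior (edom f))
              \<and> (if polyhedral_fun g then A *v x \<in> edom g else A *v x \<in> rel_interior (edom g))
              \<and> (\<forall>i. (B *v xs - b) $ i = 0 \<longrightarrow> (B *v x - b) $ i = 0))
           \<longrightarrow> stationary_P f g A B b xs)"
proof (intro conjI allI impI)
  fix x
  assume "stationary_P f g A B b x"
  then show "local_min (Fobj f g A B b lam) x"
    by (rule stationary_imp_local_min[OF f(1) g(1) lam])
next
  fix xs
  assume "local_min (Fobj f g A B b lam) xs \<and> Fobj f g A B b lam xs < \<infinity> \<and>
    (\<exists>x. (if polyhedral_fun f then x \<in> edom f else x \<in> rel_interior (edom f))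
      \<and> (if polyhedral_fun g then A *v x \<in> edom g else A *v x \<in> rel_interior (edom g))
      \<and> (\<forall>i. (B *v xs - b) $ i = 0 \<longrightarrow> (B *v x - b) $ i = 0))"
  then obtain x0 where lm: "local_min (Fobj f g A B b lam) xs" and fin: "Fobj f g A B b lam xs < \<infinity>"
    and x0: "if polyhedral_fun f then x0 \<in> edom f else x0 \<in> rel_interior (edom f)"
      "if polyhedral_fun g then A *v x0 \<in> edom g else A *v x0 \<in> rel_interior (edom g)"
      "\<forall>i. (B *v xs - b) $ i = 0 \<longrightarrow> (B *v x0 - b) $ i = 0"
    by blast
  obtain u where u:
    "u \<in> subgradients (lift_dom f \<times> lift_dom g) (\<lambda>p. lift_obj f (fst p) + lift_obj g (snd p))
      (lift_pt f xs, lift_pt g (A *v xs))"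
    "- u \<in> normal_cone ((lift_cons f \<times> lift_cons g) \<inter> coupling_set A B b {i. (B *v xs - b) $ i = 0})
      (lift_pt f xs, lift_pt g (A *v xs))"
    using local_min_imp_lifted_kkt[OF f(1) f(3) g(1) g(3) lm fin x0] by blast
  show "stationary_P f g A B b xs"
    using lifted_kkt_imp_stationary[OF f(1) g(1) Fobj_less_infinityD[OF f(1) g(1) fin] u] .
qed

end
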